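(* Let $m\ge 2$, $k\ge 2$, $n=km$, and let $O$ be an $n\times m$ sequence design. (a) If $X$ is an $n\times m$ LHD such that $D=(X,O)$ is marginally coupled, then, after some permutation of its rows, $O=(O_1^{T},\ldots,O_k^{T})^{T}$ where each $O_i$ is an $m\times m$ Latin square. (b) Conversely, if after some row permutation $O=(O_1^{T},\ldots,O_k^{T})^{T}$ with each $O_i$ an $m\times m$ Latin square, then there exists an $n\times m$ LHD $X$ such that $(X,O)$ is marginally coupled.
   Context: A sequence design is a matrix each of whose rows is a permutation of $\{1,\ldots,m\}$. An $n\times m$ LHD is a matrix each of whose columns is a permutation of $\{1,\ldots,n\}$. An $m\times m$ Latin square is a matrix each of whose rows and columns is a permutation of $\{1,\ldots,m\}$. For $n=km$, the QS design $D=(X,O)$ (same row indexing) is marginally coupled if $X$ is an LHD and for every column $u$ of $O$, every component $c\in\{1,\ldots,m\}$, and every column $j$ of $X$, the multiset $\{\lfloor (X_{rj}-1)/m\rfloor : O_{ru}=c\}$ equals $\{0,1,\ldots,k-1\}$ (each value exactly once); i.e., for each level of each factor in $O$ the corresponding points of $X$ form a small LHD after collapsing the $n$ levels to $k$ levels. *)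

theory Defs
  imports Main "HOL-Library.Multiset"
begin

text \<open>Matrices are functions nat => nat => nat; row indices 0..<rows,
  column indices 0..<cols; entries are 1-based levels.\<close>

definition sequence_design :: "nat \<Rightarrow> nat \<Rightarrow> (nat \<Rightarrow> nat \<Rightarrow> nat) \<Rightarrow> bool" where
  "sequence_design n m Q \<longleftrightarrow> (\<forall>r<n. bij_betw (\<lambda>j. Q r j) {0..<m} {1..m})"

definition LHD :: "nat \<Rightarrow> nat \<Rightarrow> (nat \<Rightarrow> nat \<Rightarrow> nat) \<Rightarrow> bool" where
  "LHD n m X \<longleftrightarrow> (\<forall>j<m. bij_betw (\<lambda>r. X r j) {0..<n} {1..n})"

definition latin_square :: "nat \<Rightarrow> (nat \<Rightarrow> nat \<Rightarrow> nat) \<Rightarrow> bool" where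
  "latin_square m L \<longleftrightarrow>
     (\<forall>r<m. bij_betw (\<lambda>j. L r j) {0..<m} {1..m}) \<and>
     (\<forall>j<m. bij_betw (\<lambda>r. L r j) {0..<m} {1..m})"

definition marginally_coupled ::
  "nat \<Rightarrow> nat \<Rightarrow> (nat \<Rightarrow> nat \<Rightarrow> nat) \<Rightarrow> (nat \<Rightarrow> nat \<Rightarrow> nat) \<Rightarrow> bool" where
  "marginally_coupled k m X Q \<longleftrightarrow>
     LHD (k * m) m X \<and>
     (\<forall>u<m. \<forall>c\<in>{1..m}. \<forall>j<m.
        image_mset (\<lambda>r. (X r j - 1) div m) (mset_set {r\<in>{0..<k * m}. Q r u = c})
          = mset_set {0..<k})"

definition stacked_latin :: "nat \<Rightarrow> nat \<Rightarrow> (nat \<Rightarrow> nat \<Rightarrow> nat) \<Rightarrow> bool" where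
  "stacked_latin k m Q \<longleftrightarrow>
     (\<exists>\<sigma>. bij_betw \<sigma> {0..<k * m} {0..<k * m} \<and>
          (\<forall>i<k. latin_square m (\<lambda>a b. Q (\<sigma> (i * m + a)) b)))"

end

theory Submission
  imports Defs
begin

text \<open>Order the rows of O by a bijection \<tau> onto the positions {0..<km} and cut the ordered
  rows into k consecutive blocks of m rows, the block of row r being \<tau> r div m. For a fixed
  column u of O, the u-th columns of the blocks are all permutations of {1..m} exactly when
  every level c of column u occurs in every block exactly once, i.e. when r \<mapsto> \<tau> r div m
  maps the rows at level c bijectively onto the k blocks. For \<tau> r = X r 0 - 1 that is what
  marginal coupling asserts about the first column of X; conversely, if O is a stack of Latin
  squares, the LHD all of whose columns list the rows in stacked order is marginally coupled.\<close>

lemma bij_betw_add_one: "bij_betw (\<lambda>p::nat. p + 1) {0..<n} {1..n}"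
  by (simp add: atLeastLessThanSuc_atLeastAtMost[symmetric] del: atLeastLessThanSuc_atLeastAtMost)

lemma bij_betw_diff_one:
  fixes f :: "'a \<Rightarrow> nat"
  assumes "bij_betw f A {1..n}"
  shows "bij_betw (\<lambda>x. f x - 1) A {0..<n}"
proof -
  have "bij_betw (\<lambda>v::nat. v - 1) {1..n} {0..<n}"
    by (rule bij_betw_byWitness[where f' = "\<lambda>p. p + 1"]) auto
  then show ?thesis
    using bij_betw_trans[OF assms] by (simp add: o_def)
qed

lemma image_mset_mset_set_eq_iff_bij_betw:
  assumes "finite A" and "finite B"
  shows "image_mset f (mset_set A) = mset_set B \<longleftrightarrow> bij_betw f A B"
proof
  assume eq: "image_mset f (mset_set A) = mset_set B"
  have "f ` A = B"
    using arg_cong[OF eq, of set_mset] assms by (metis finite_set_mset_mset_set set_image_mset)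
  moreover have "card A = card B"
    using arg_cong[OF eq, of size] by simp
  ultimately show "bij_betw f A B"
    using assms by (simp add: bij_betw_def eq_card_imp_inj_on)
qed (simp add: bij_betw_def image_mset_mset_set)

lemma bij_betw_left_inverse_is_right_inverse:
  assumes "bij_betw \<tau> A B" and "\<And>r. r \<in> A \<Longrightarrow> \<sigma> (\<tau> r) = r" and "p \<in> B"
  shows "\<sigma> p \<in> A" and "\<tau> (\<sigma> p) = p"
proof -
  obtain r where "r \<in> A" "p = \<tau> r"
    using assms(1,3) by (auto simp: bij_betw_def)
  then show "\<sigma> p \<in> A" and "\<tau> (\<sigma> p) = p"
    using assms(2) by auto
qed

lemma block_position_less:
  fixes i a k m :: nat
  assumes "i < k" and "a < m"
  shows "i * m + a < k * m"
proof -
  have "i * m + a < (i + 1) * m" using assms(2) by simp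
  also have "\<dots> \<le> k * m" using assms(1) by (intro mult_right_mono) auto
  finally show ?thesis .
qed

lemma block_columns_bij_if_levels_meet_blocks_once:
  fixes Q :: "nat \<Rightarrow> nat \<Rightarrow> nat"
  assumes \<tau>: "bij_betw \<tau> {0..<k * m} {0..<k * m}"
    and \<sigma>: "\<And>r. r < k * m \<Longrightarrow> \<sigma> (\<tau> r) = r"
    and levels: "\<And>r. r < k * m \<Longrightarrow> Q r u \<in> {1..m}"
    and meet: "\<And>c. c \<in> {1..m} \<Longrightarrow>
                 bij_betw (\<lambda>r. \<tau> r div m) {r \<in> {0..<k * m}. Q r u = c} {0..<k}"
    and i: "i < k"
  shows "bij_betw (\<lambda>a. Q (\<sigma> (i * m + a)) u) {0..<m} {1..m}"
proof -
  have row_less: "\<sigma> (i * m + a) < k * m" if "a < m" for a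
    using bij_betw_left_inverse_is_right_inverse(1)[OF \<tau>] \<sigma> block_position_less[OF i that]
    by simp
  have onto: "(\<lambda>a. Q (\<sigma> (i * m + a)) u) ` {0..<m} = {1..m}"
  proof
    show "(\<lambda>a. Q (\<sigma> (i * m + a)) u) ` {0..<m} \<subseteq> {1..m}"
      using levels row_less by auto
  next
    show "{1..m} \<subseteq> (\<lambda>a. Q (\<sigma> (i * m + a)) u) ` {0..<m}"
    proof
      fix c assume c: "c \<in> {1..m}"
      have "i \<in> (\<lambda>r. \<tau> r div m) ` {r \<in> {0..<k * m}. Q r u = c}"
        using bij_betw_imp_surj_on[OF meet[OF c]] i by simp
      then obtain r where r: "r < k * m" "Q r u = c" and block: "\<tau> r div m = i"
        by auto
      have "\<tau> r mod m \<in> {0..<m}"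
        using c by simp
      moreover have "i * m + \<tau> r mod m = \<tau> r"
        using block by (metis div_mult_mod_eq)
      then have "c = Q (\<sigma> (i * m + \<tau> r mod m)) u"
        using \<sigma> r by simp
      ultimately show "c \<in> (\<lambda>a. Q (\<sigma> (i * m + a)) u) ` {0..<m}"
        by (rule rev_image_eqI)
    qed
  qed
  then have "inj_on (\<lambda>a. Q (\<sigma> (i * m + a)) u) {0..<m}"
    by (intro eq_card_imp_inj_on) simp_all
  with onto show ?thesis
    by (simp add: bij_betw_def)
qed

lemma levels_meet_blocks_once_if_block_columns_bij:
  fixes Q :: "nat \<Rightarrow> nat \<Rightarrow> nat"
  assumes \<tau>: "bij_betw \<tau> {0..<k * m} {0..<k * m}"
    and \<sigma>: "\<And>r. r < k * m \<Longrightarrow> \<sigma> (\<tau> r) = r"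
    and columns: "\<And>i. i < k \<Longrightarrow> bij_betw (\<lambda>a. Q (\<sigma> (i * m + a)) u) {0..<m} {1..m}"
    and c: "c \<in> {1..m}"
  shows "bij_betw (\<lambda>r. \<tau> r div m) {r \<in> {0..<k * m}. Q r u = c} {0..<k}"
proof -
  let ?R = "{r \<in> {0..<k * m}. Q r u = c}"
  have block_less: "\<tau> r div m < k" if "r < k * m" for r
    using \<tau> that by (auto dest: bij_betwE simp: less_mult_imp_div_less)
  have "inj_on (\<lambda>r. \<tau> r div m) ?R"
  proof (rule inj_onI)
    fix r s assume r: "r \<in> ?R" and s: "s \<in> ?R" and same_block: "\<tau> r div m = \<tau> s div m"
    let ?i = "\<tau> r div m"
    have "Q (\<sigma> (?i * m + \<tau> r mod m)) u = c"
      using \<sigma> r by simp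
    moreover have "Q (\<sigma> (\<tau> s div m * m + \<tau> s mod m)) u = c"
      using \<sigma> s by simp
    then have "Q (\<sigma> (?i * m + \<tau> s mod m)) u = c"
      by (simp only: same_block)
    ultimately have same_level: "Q (\<sigma> (?i * m + \<tau> r mod m)) u = Q (\<sigma> (?i * m + \<tau> s mod m)) u"
      by simp
    have "inj_on (\<lambda>a. Q (\<sigma> (?i * m + a)) u) {0..<m}"
      using columns[OF block_less] r by (simp add: bij_betw_def)
    moreover have "\<tau> r mod m \<in> {0..<m}" "\<tau> s mod m \<in> {0..<m}"
      using c by simp_all
    ultimately have "\<tau> r mod m = \<tau> s mod m"
      using same_level by (blast dest: inj_onD)
    with same_block have "\<tau> r = \<tau> s"
      by (metis div_mult_mod_eq)
    then show "r = s"
      using \<sigma> r s by (metis atLeastLessThan_iff mem_Collect_eq)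
  qed
  moreover have "(\<lambda>r. \<tau> r div m) ` ?R = {0..<k}"
  proof
    show "(\<lambda>r. \<tau> r div m) ` ?R \<subseteq> {0..<k}"
      using block_less by auto
  next
    show "{0..<k} \<subseteq> (\<lambda>r. \<tau> r div m) ` ?R"
    proof
      fix i assume i: "i \<in> {0..<k}"
      then have "c \<in> (\<lambda>a. Q (\<sigma> (i * m + a)) u) ` {0..<m}"
        using bij_betw_imp_surj_on[OF columns] c by simp
      then obtain a where a: "a < m" and level: "Q (\<sigma> (i * m + a)) u = c"
        by auto
      have "\<sigma> (i * m + a) < k * m" and "\<tau> (\<sigma> (i * m + a)) = i * m + a"
        using bij_betw_left_inverse_is_right_inverse[OF \<tau>] \<sigma> block_position_less a i
        by simp_all
      with a level show "i \<in> (\<lambda>r. \<tau> r div m) ` ?R"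
        by (intro rev_image_eqI[of "\<sigma> (i * m + a)"]) simp_all
    qed
  qed
  ultimately show ?thesis
    by (simp add: bij_betw_def)
qed

lemma stacked_latin_if_marginally_coupled:
  fixes Q X :: "nat \<Rightarrow> nat \<Rightarrow> nat"
  assumes m: "0 < m" and design: "sequence_design (k * m) m Q"
    and coupled: "marginally_coupled k m X Q"
  shows "stacked_latin k m Q"
proof -
  define \<tau> where "\<tau> r = X r 0 - 1" for r
  define \<sigma> where "\<sigma> = inv_into {0..<k * m} \<tau>"
  have "bij_betw (\<lambda>r. X r 0) {0..<k * m} {1..k * m}"
    using coupled m unfolding marginally_coupled_def LHD_def by blast
  then have \<tau>: "bij_betw \<tau> {0..<k * m} {0..<k * m}"
    unfolding \<tau>_def by (rule bij_betw_diff_one)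
  have \<sigma>\<tau>: "\<sigma> (\<tau> r) = r" if "r < k * m" for r
    unfolding \<sigma>_def using bij_betw_inv_into_left[OF \<tau>] that by simp
  have levels: "Q r u \<in> {1..m}" if "r < k * m" "u < m" for r u
  proof -
    have "bij_betw (Q r) {0..<m} {1..m}"
      using design that(1) unfolding sequence_design_def by blast
    then show ?thesis
      by (rule bij_betw_apply) (use that(2) in simp)
  qed
  have meet: "bij_betw (\<lambda>r. \<tau> r div m) {r \<in> {0..<k * m}. Q r u = c} {0..<k}"
    if "u < m" "c \<in> {1..m}" for u c
  proof -
    have "image_mset (\<lambda>r. \<tau> r div m) (mset_set {r \<in> {0..<k * m}. Q r u = c}) = mset_set {0..<k}"
      using coupled that m unfolding marginally_coupled_def \<tau>_def by blast
    then show ?thesis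
      by (simp add: image_mset_mset_set_eq_iff_bij_betw)
  qed
  have "latin_square m (\<lambda>a b. Q (\<sigma> (i * m + a)) b)" if i: "i < k" for i
    unfolding latin_square_def
  proof (intro conjI allI impI)
    fix a assume "a < m"
    then have "\<sigma> (i * m + a) < k * m"
      using bij_betw_left_inverse_is_right_inverse(1)[OF \<tau>] \<sigma>\<tau> block_position_less i by auto
    then show "bij_betw (\<lambda>b. Q (\<sigma> (i * m + a)) b) {0..<m} {1..m}"
      using design unfolding sequence_design_def by blast
  next
    fix u assume "u < m"
    then show "bij_betw (\<lambda>a. Q (\<sigma> (i * m + a)) u) {0..<m} {1..m}"
      using block_columns_bij_if_levels_meet_blocks_once[OF \<tau>] \<sigma>\<tau> levels meet i by blast
  qed
  moreover have "bij_betw \<sigma> {0..<k * m} {0..<k * m}"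
    unfolding \<sigma>_def by (rule bij_betw_inv_into[OF \<tau>])
  ultimately show ?thesis
    unfolding stacked_latin_def by blast
qed

lemma marginally_coupled_if_stacked_latin:
  fixes Q :: "nat \<Rightarrow> nat \<Rightarrow> nat"
  assumes "stacked_latin k m Q"
  shows "\<exists>X. marginally_coupled k m X Q"
proof -
  obtain \<sigma> where \<sigma>: "bij_betw \<sigma> {0..<k * m} {0..<k * m}"
    and latin: "\<And>i. i < k \<Longrightarrow> latin_square m (\<lambda>a b. Q (\<sigma> (i * m + a)) b)"
    using assms unfolding stacked_latin_def by blast
  define \<tau> where "\<tau> = inv_into {0..<k * m} \<sigma>"
  have \<tau>: "bij_betw \<tau> {0..<k * m} {0..<k * m}"
    unfolding \<tau>_def by (rule bij_betw_inv_into[OF \<sigma>])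
  have \<sigma>\<tau>: "\<sigma> (\<tau> r) = r" if "r < k * m" for r
    unfolding \<tau>_def using bij_betw_inv_into_right[OF \<sigma>] that by simp
  have columns: "bij_betw (\<lambda>a. Q (\<sigma> (i * m + a)) u) {0..<m} {1..m}" if "u < m" "i < k" for u i
    using latin that unfolding latin_square_def by blast
  have "bij_betw (\<lambda>r. \<tau> r + 1) {0..<k * m} {1..k * m}"
    using bij_betw_trans[OF \<tau> bij_betw_add_one] by (simp add: o_def)
  moreover have "bij_betw (\<lambda>r. \<tau> r div m) {r \<in> {0..<k * m}. Q r u = c} {0..<k}"
    if "u < m" "c \<in> {1..m}" for u c
    by (rule levels_meet_blocks_once_if_block_columns_bij[where \<sigma> = \<sigma> and Q = Q and u = u,
          OF \<tau> \<sigma>\<tau> columns[OF that(1)] that(2)])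
  ultimately have "marginally_coupled k m (\<lambda>r j. \<tau> r + 1) Q"
    unfolding marginally_coupled_def LHD_def
    by (simp add: image_mset_mset_set_eq_iff_bij_betw)
  then show ?thesis by blast
qed

theorem lemma4:
  fixes m k n :: nat and Q :: "nat \<Rightarrow> nat \<Rightarrow> nat"
  assumes "m \<ge> 2" and "k \<ge> 2" and "n = k * m"
    and "sequence_design n m Q"
  shows "(\<forall>X. LHD n m X \<and> marginally_coupled k m X Q \<longrightarrow> stacked_latin k m Q)
       \<and> (stacked_latin k m Q \<longrightarrow> (\<exists>X. LHD n m X \<and> marginally_coupled k m X Q))"
proof (intro conjI allI impI)
  fix X assume "LHD n m X \<and> marginally_coupled k m X Q"
  moreover have "0 < m"
    using assms(1) by simp
  ultimately show "stacked_latin k m Q"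
    using stacked_latin_if_marginally_coupled assms(3,4) by blast
next
  assume "stacked_latin k m Q"
  then obtain X where "marginally_coupled k m X Q"
    using marginally_coupled_if_stacked_latin by blast
  then show "\<exists>X. LHD n m X \<and> marginally_coupled k m X Q"
    using assms(3) unfolding marginally_coupled_def by blast
qed

end
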